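(* Let $\eta_1,\eta_2,\dots$ be independent standard Gaussian random variables. Then, as $n\to\infty$, $$\mathbb{E}\,\max\{|\eta_1|,\dots,|\eta_n|\} = \left( 1 + \frac{1+o(1)}{8n \log n}\right) \mathbb{E}\,\max\{\eta_1,\dots,\eta_{2n}\}.$$ *)

theory Defs
  imports "HOL-Probability.Probability"
begin

end

theory Submission
  imports Defs "HOL-Real_Asymp.Real_Asymp"
begin

text \<open>Write \<open>Q\<close> for the standard normal tail and \<open>\<Phi> = 1 - Q\<close>. Integrating tail probabilities,
  \<open>E max{|\<eta> i| | i \<le> n} = \<integral>(0,\<infinity>) 1 - (1 - 2Q)^n\<close> and \<open>E max{\<eta> i | i \<le> 2n} = J - N\<close>
  with \<open>J = \<integral>(0,\<infinity>) 1 - (1 - Q)^(2n)\<close> and \<open>N = \<integral>(-\<infinity>,0) \<Phi>^(2n) = O(4^-n)\<close>. Hence the ratio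
  minus one is \<open>(I + N) / (J - N)\<close> with \<open>I = \<integral>(0,\<infinity>) (1 - Q)^(2n) - (1 - 2Q)^n\<close>, whose integrand
  is close to \<open>n Q^2 exp(-2nQ)\<close>. Split \<open>(0,\<infinity>)\<close> at \<open>a = \<surd>(2 ln n - 8 ln ln n)\<close> and
  \<open>b = \<surd>(2 ln n + 2 ln ln n)\<close>, chosen so that \<open>n Q(a) \<rightarrow> \<infinity>\<close> and \<open>n Q(b) \<rightarrow> 0\<close>. On \<open>(a,b]\<close>,
  Mills' ratio bounds \<open>\<phi>(t) t / (1 + t^2) \<le> Q(t) \<le> \<phi>(t) / t\<close> trade one factor \<open>Q\<close> for
  \<open>\<phi> = -Q'\<close>, after which the integral is explicit; this gives \<open>I \<sim> 1 / (4n \<surd>(2 ln n))\<close>, and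
  the same splitting gives \<open>J \<sim> \<surd>(2 ln n)\<close>.\<close>

lemma set_integral_nonneg:
  fixes f :: "'a \<Rightarrow> real"
  shows "(\<And>x. x \<in> A \<Longrightarrow> 0 \<le> f x) \<Longrightarrow> 0 \<le> (LINT x:A|M. f x)"
  unfolding set_lebesgue_integral_def by (intro Bochner_Integration.integral_nonneg) (simp add: indicator_def)

lemma set_integral_Ioi_split:
  fixes f :: "real \<Rightarrow> real"
  assumes "0 < a" "a \<le> b" and f: "set_integrable lborel {0<..} f"
  shows "set_integrable lborel {0<..a} f" "set_integrable lborel {a<..b} f" "set_integrable lborel {b<..} f"
    and "(LINT t:{0<..}|lborel. f t)
      = (LINT t:{0<..a}|lborel. f t) + (LINT t:{a<..b}|lborel. f t) + (LINT t:{b<..}|lborel. f t)"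
proof -
  show I: "set_integrable lborel {0<..a} f" "set_integrable lborel {a<..b} f" "set_integrable lborel {b<..} f"
    using assms by (auto intro: set_integrable_subset[OF f])
  have I': "set_integrable lborel ({a<..b} \<union> {b<..}) f"
    using assms by (auto intro: set_integrable_subset[OF f])
  have "(LINT t:{0<..}|lborel. f t) = (LINT t:{0<..a} \<union> ({a<..b} \<union> {b<..})|lborel. f t)"
    using assms by (intro arg_cong[where f="\<lambda>A. set_lebesgue_integral lborel A f"]) auto
  also have "\<dots> = (LINT t:{0<..a}|lborel. f t) + (LINT t:{a<..b} \<union> {b<..}|lborel. f t)"
    by (rule set_integral_Un) (use I I' assms in auto)
  also have "(LINT t:{a<..b} \<union> {b<..}|lborel. f t) = (LINT t:{a<..b}|lborel. f t) + (LINT t:{b<..}|lborel. f t)"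
    by (rule set_integral_Un) (use I in auto)
  finally show "(LINT t:{0<..}|lborel. f t)
      = (LINT t:{0<..a}|lborel. f t) + (LINT t:{a<..b}|lborel. f t) + (LINT t:{b<..}|lborel. f t)"
    by simp
qed

lemma FTC_Ioi_nonneg:
  fixes F f :: "real \<Rightarrow> real"
  assumes "\<And>x. x \<ge> b \<Longrightarrow> (F has_real_derivative f x) (at x)"
    and "\<And>x. x > b \<Longrightarrow> isCont f x"
    and "\<And>x. x > b \<Longrightarrow> 0 \<le> f x"
    and "(F \<longlongrightarrow> L) at_top"
  shows "set_integrable lborel {b<..} f" "(LINT t:{b<..}|lborel. f t) = L - F b"
proof -
  have "isCont F b"
    using assms(1)[of b] DERIV_isCont by blast
  then have "((F \<circ> real_of_ereal) \<longlongrightarrow> F b) (at_right (ereal b))"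
    unfolding ereal_tendsto_simps
    by (simp add: continuous_at_split continuous_within filterlim_at_split)
  moreover have "((F \<circ> real_of_ereal) \<longlongrightarrow> L) (at_left \<infinity>)"
    unfolding ereal_tendsto_simps by (rule assms(4))
  ultimately have "set_integrable lborel (einterval (ereal b) \<infinity>) f \<and> (LBINT t=ereal b..\<infinity>. f t) = L - F b"
    using interval_integral_FTC_nonneg[of "ereal b" \<infinity> F f] assms by (auto simp: less_imp_le)
  then show "set_integrable lborel {b<..} f" "(LINT t:{b<..}|lborel. f t) = L - F b"
    by (auto simp: interval_integral_to_infinity_eq einterval_def greaterThan_def)
qed

lemma real_sqrt_pow2_abs: "(sqrt x)\<^sup>2 = \<bar>x\<bar>"
proof (cases "0 \<le> x")
  case False
  then have "sqrt x = - sqrt (- x)"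
    by (simp add: real_sqrt_minus)
  then show ?thesis
    using False by simp
qed simp

lemma divide_one_plus_square_antimono:
  fixes s t :: real
  assumes "1 \<le> s" "s \<le> t"
  shows "t / (1 + t\<^sup>2) \<le> s / (1 + s\<^sup>2)"
proof -
  have "1 * 1 \<le> s * t"
    using assms by (intro mult_mono) auto
  then have "(t - s) * (1 - s * t) \<le> 0"
    using assms by (intro mult_nonneg_nonpos) auto
  then have "t * (1 + s\<^sup>2) \<le> s * (1 + t\<^sup>2)"
    by (simp add: algebra_simps power2_eq_square)
  then show ?thesis
    by (simp add: field_simps add_pos_nonneg)
qed

lemma power_diff_bounds:
  fixes a b :: real
  assumes "0 \<le> b" "b \<le> a"
  shows "real (Suc m) * (a - b) * b ^ m \<le> a ^ Suc m - b ^ Suc m"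
    and "a ^ Suc m - b ^ Suc m \<le> real (Suc m) * (a - b) * a ^ m"
proof -
  have "a ^ Suc m - b ^ Suc m = (a - b) * (\<Sum>i<Suc m. a ^ i * b ^ (m - i))"
    by (subst power_diff_sumr2) (simp add: mult_ac)
  moreover have "b ^ m \<le> a ^ i * b ^ (m - i)" "a ^ i * b ^ (m - i) \<le> a ^ m" if "i \<le> m" for i
  proof -
    have "b ^ m = b ^ i * b ^ (m - i)" "a ^ m = a ^ i * a ^ (m - i)"
      using that by (simp_all flip: power_add)
    then show "b ^ m \<le> a ^ i * b ^ (m - i)" "a ^ i * b ^ (m - i) \<le> a ^ m"
      using assms by (auto intro!: mult_mono power_mono)
  qed
  then have "real (Suc m) * b ^ m \<le> (\<Sum>i<Suc m. a ^ i * b ^ (m - i))"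
    "(\<Sum>i<Suc m. a ^ i * b ^ (m - i)) \<le> real (Suc m) * a ^ m"
    using sum_mono[of "{..<Suc m}" "\<lambda>_. b ^ m" "\<lambda>i. a ^ i * b ^ (m - i)"]
      sum_mono[of "{..<Suc m}" "\<lambda>i. a ^ i * b ^ (m - i)" "\<lambda>_. a ^ m"] by auto
  ultimately show "real (Suc m) * (a - b) * b ^ m \<le> a ^ Suc m - b ^ Suc m"
    "a ^ Suc m - b ^ Suc m \<le> real (Suc m) * (a - b) * a ^ m"
    using assms by (auto simp: mult_ac intro: mult_left_mono)
qed

lemma one_minus_power_le_exp:
  fixes x :: real
  assumes "x \<le> 1"
  shows "(1 - x) ^ m \<le> exp (- (real m * x))"
proof -
  have "(1 - x) ^ m \<le> exp (- x) ^ m"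
    using assms exp_ge_add_one_self[of "- x"] by (intro power_mono) auto
  then show ?thesis
    by (simp flip: exp_of_nat_mult)
qed

lemma power_gap_bounds:
  fixes x :: real
  assumes "0 \<le> x" "x \<le> 1/2" "1 \<le> n"
  shows "real n * x\<^sup>2 * (1 - 2*x) ^ (n - 1) \<le> (1 - x) ^ (2*n) - (1 - 2*x) ^ n"
    and "(1 - x) ^ (2*n) - (1 - 2*x) ^ n \<le> real n * x\<^sup>2 * (1 - x) ^ (2*n - 2)"
proof -
  obtain m where m: "n = Suc m"
    using assms(3) by (cases n) auto
  have "(1 - x) ^ (2*n) = ((1 - x)\<^sup>2) ^ n" "(1 - x) ^ (2*n - 2) = ((1 - x)\<^sup>2) ^ m"
    by (simp add: power_mult) (simp add: m power_mult[symmetric])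
  moreover have "0 \<le> 1 - 2*x" "1 - 2*x \<le> (1 - x)\<^sup>2"
    using assms by (auto simp: power2_eq_square algebra_simps)
  note power_diff_bounds[OF this(1,2), of m]
  ultimately show "real n * x\<^sup>2 * (1 - 2*x) ^ (n - 1) \<le> (1 - x) ^ (2*n) - (1 - 2*x) ^ n"
    "(1 - x) ^ (2*n) - (1 - 2*x) ^ n \<le> real n * x\<^sup>2 * (1 - x) ^ (2*n - 2)"
    using m by (simp_all add: power2_eq_square algebra_simps)
qed

lemma power_gap_nonneg:
  fixes x :: real
  assumes "0 \<le> x" "x \<le> 1/2" "1 \<le> n"
  shows "0 \<le> (1 - x) ^ (2*n) - (1 - 2*x) ^ n"
proof -
  have "0 \<le> real n * x\<^sup>2 * (1 - 2*x) ^ (n - 1)"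
    using assms by simp
  with power_gap_bounds(1)[OF assms] show ?thesis
    by linarith
qed

lemma power_gap_le_exp:
  fixes x :: real
  assumes "0 \<le> x" "x \<le> 1/2" "1 \<le> n"
  shows "(1 - x) ^ (2*n) - (1 - 2*x) ^ n \<le> real n * x\<^sup>2 * exp (- ((2 * real n - 2) * x))"
proof -
  have "(1 - x) ^ (2*n - 2) \<le> exp (- ((2 * real n - 2) * x))"
    using assms one_minus_power_le_exp[of x "2*n - 2"] by (simp add: of_nat_diff)
  then have "real n * x\<^sup>2 * (1 - x) ^ (2*n - 2) \<le> real n * x\<^sup>2 * exp (- ((2 * real n - 2) * x))"
    by (intro mult_left_mono) auto
  with power_gap_bounds(2)[OF assms] show ?thesis
    by linarith
qed

lemma power_gap_ge_exp:
  fixes x :: real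
  assumes "0 \<le> x" "x \<le> 1/4" "1 \<le> n"
  shows "real n * x\<^sup>2 * exp (- (2 * real n * x + 8 * real n * x\<^sup>2)) \<le> (1 - x) ^ (2*n) - (1 - 2*x) ^ n"
proof -
  have "- (2*x) - 2 * (2*x)\<^sup>2 \<le> ln (1 - 2*x)"
    using assms by (intro ln_one_minus_pos_lower_bound) auto
  then have "exp (- (2*x) - 2 * (2*x)\<^sup>2) \<le> exp (ln (1 - 2*x))"
    by simp
  then have "exp (- (2*x) - 2 * (2*x)\<^sup>2) \<le> 1 - 2*x"
    using assms by simp
  then have "exp (- (2*x) - 2 * (2*x)\<^sup>2) ^ n \<le> (1 - 2*x) ^ n"
    by (intro power_mono) auto
  also have "\<dots> \<le> (1 - 2*x) ^ (n - 1)"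
    using assms by (intro power_decreasing) auto
  finally have "exp (- (2 * real n * x + 8 * real n * x\<^sup>2)) \<le> (1 - 2*x) ^ (n - 1)"
    by (simp flip: exp_of_nat_mult add: algebra_simps power2_eq_square)
  then have "real n * x\<^sup>2 * exp (- (2 * real n * x + 8 * real n * x\<^sup>2)) \<le> real n * x\<^sup>2 * (1 - 2*x) ^ (n - 1)"
    by (intro mult_left_mono) auto
  with power_gap_bounds(1)[of x n] assms show ?thesis
    by linarith
qed

section \<open>Expectations and tail probabilities\<close>

lemma integrable_Max:
  fixes f :: "'i \<Rightarrow> 'a \<Rightarrow> real"
  assumes "finite I" "I \<noteq> {}" "\<And>i. i \<in> I \<Longrightarrow> integrable M (f i)"
  shows "integrable M (\<lambda>x. Max ((\<lambda>i. f i x) ` I))"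
  using assms
proof (induction I rule: finite_ne_induct)
  case (insert i I)
  then have "(\<lambda>x. Max ((\<lambda>i. f i x) ` insert i I)) = (\<lambda>x. max (f i x) (Max ((\<lambda>i. f i x) ` I)))"
    by simp
  with insert show ?case
    by simp
qed simp

lemma (in prob_space) nn_integral_tail_prob:
  fixes X :: "'a \<Rightarrow> real"
  assumes [measurable]: "X \<in> borel_measurable M" and nonneg: "\<And>\<omega>. \<omega> \<in> space M \<Longrightarrow> 0 \<le> X \<omega>"
  shows "(\<integral>\<^sup>+t. indicator {0<..} t * emeasure M {\<omega>\<in>space M. t \<le> X \<omega>} \<partial>lborel) = (\<integral>\<^sup>+\<omega>. X \<omega> \<partial>M)"
proof -
  interpret pair_sigma_finite M lborel ..
  let ?E = "{p. 0 < snd p \<and> snd p \<le> X (fst p)}"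
  have "(\<integral>\<^sup>+t. indicator {0<..} t * emeasure M {\<omega>\<in>space M. t \<le> X \<omega>} \<partial>lborel)
      = (\<integral>\<^sup>+t. (\<integral>\<^sup>+\<omega>. indicator ?E (\<omega>, t) \<partial>M) \<partial>lborel)"
  proof (rule nn_integral_cong)
    fix t :: real
    have "(\<integral>\<^sup>+\<omega>. indicator ?E (\<omega>, t) \<partial>M)
        = (\<integral>\<^sup>+\<omega>. indicator {0<..} t * indicator {\<omega>\<in>space M. t \<le> X \<omega>} \<omega> \<partial>M)"
      by (rule nn_integral_cong) (auto split: split_indicator)
    then show "indicator {0<..} t * emeasure M {\<omega>\<in>space M. t \<le> X \<omega>} = (\<integral>\<^sup>+\<omega>. indicator ?E (\<omega>, t) \<partial>M)"
      by (subst (asm) nn_integral_cmult) auto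
  qed
  also have "\<dots> = (\<integral>\<^sup>+\<omega>. (\<integral>\<^sup>+t. indicator ?E (\<omega>, t) \<partial>lborel) \<partial>M)"
    by (rule Fubini) measurable
  also have "\<dots> = (\<integral>\<^sup>+\<omega>. X \<omega> \<partial>M)"
  proof (rule nn_integral_cong)
    fix \<omega> assume "\<omega> \<in> space M"
    then have "(\<integral>\<^sup>+t. indicator ?E (\<omega>, t) \<partial>lborel) = (\<integral>\<^sup>+t. indicator {0<..X \<omega>} t \<partial>lborel)"
      by (intro nn_integral_cong) (auto split: split_indicator)
    then show "(\<integral>\<^sup>+t. indicator ?E (\<omega>, t) \<partial>lborel) = ennreal (X \<omega>)"
      using nonneg[OF \<open>\<omega> \<in> space M\<close>] by simp
  qed
  finally show ?thesis .
qed

lemma set_integral_eq_if_nn_integral_eq: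
  fixes g :: "real \<Rightarrow> real"
  assumes [measurable]: "g \<in> borel_measurable borel" "A \<in> sets borel"
    and nonneg: "\<And>t. t \<in> A \<Longrightarrow> 0 \<le> g t" and "0 \<le> c"
    and eq: "(\<integral>\<^sup>+t. indicator A t * ennreal (g t) \<partial>lborel) = ennreal c"
  shows "set_integrable lborel A g" "(LINT t:A|lborel. g t) = c"
proof -
  have "(\<integral>\<^sup>+t. ennreal (indicator A t * g t) \<partial>lborel) = (\<integral>\<^sup>+t. indicator A t * ennreal (g t) \<partial>lborel)"
    by (rule nn_integral_cong) (simp split: split_indicator)
  with eq have eq': "(\<integral>\<^sup>+t. ennreal (indicator A t * g t) \<partial>lborel) = ennreal c"
    by simp
  have "integrable lborel (\<lambda>t. indicator A t * g t)"
    by (rule integrableI_nonneg) (use nonneg eq' in \<open>auto simp: indicator_def\<close>)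
  then show "set_integrable lborel A g"
    by (simp add: set_integrable_def)
  have "(LINT t:A|lborel. g t) = enn2real (\<integral>\<^sup>+t. ennreal (indicator A t * g t) \<partial>lborel)"
    unfolding set_lebesgue_integral_def
    by (simp, rule integral_eq_nn_integral) (use nonneg in \<open>auto simp: indicator_def\<close>)
  then show "(LINT t:A|lborel. g t) = c"
    using eq' \<open>0 \<le> c\<close> by simp
qed

lemma (in prob_space) borel_measurable_prob_ge:
  fixes X :: "'a \<Rightarrow> real"
  assumes [measurable]: "X \<in> borel_measurable M"
  shows "(\<lambda>t. prob {\<omega>\<in>space M. t \<le> X \<omega>}) \<in> borel_measurable borel"
proof -
  have "mono (\<lambda>t. - prob {\<omega>\<in>space M. t \<le> X \<omega>})"
    by (auto simp: mono_def intro!: finite_measure_mono) measurable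
  from borel_measurable_mono[OF this] show ?thesis
    by (subst minus_minus[symmetric]) measurable
qed

lemma (in prob_space) tail_integral_eq_expectation_pos_part:
  fixes X :: "'a \<Rightarrow> real"
  assumes X: "integrable M X"
  shows "set_integrable lborel {0<..} (\<lambda>t. prob {\<omega>\<in>space M. t \<le> X \<omega>})"
    and "(LINT t:{0<..}|lborel. prob {\<omega>\<in>space M. t \<le> X \<omega>}) = expectation (\<lambda>\<omega>. max 0 (X \<omega>))"
proof -
  have Xm [measurable]: "X \<in> borel_measurable M"
    using X by auto
  define Xp where "Xp = (\<lambda>\<omega>. max 0 (X \<omega>))"
  have [measurable]: "Xp \<in> borel_measurable M"
    unfolding Xp_def by measurable
  have Xp: "integrable M Xp"
    unfolding Xp_def using X by auto
  have "(\<integral>\<^sup>+t. indicator {0<..} t * ennreal (prob {\<omega>\<in>space M. t \<le> X \<omega>}) \<partial>lborel)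
      = (\<integral>\<^sup>+t. indicator {0<..} t * emeasure M {\<omega>\<in>space M. t \<le> Xp \<omega>} \<partial>lborel)"
  proof (rule nn_integral_cong)
    fix t :: real
    have "0 < t \<Longrightarrow> {\<omega>\<in>space M. t \<le> Xp \<omega>} = {\<omega>\<in>space M. t \<le> X \<omega>}"
      by (auto simp: Xp_def)
    then show "indicator {0<..} t * ennreal (prob {\<omega>\<in>space M. t \<le> X \<omega>})
        = indicator {0<..} t * emeasure M {\<omega>\<in>space M. t \<le> Xp \<omega>}"
      by (cases "0 < t") (simp_all add: emeasure_eq_measure)
  qed
  also have "\<dots> = ennreal (expectation Xp)"
    using nn_integral_tail_prob[of Xp] nn_integral_eq_integral[OF Xp] by (simp add: Xp_def)
  finally have eq: "(\<integral>\<^sup>+t. indicator {0<..} t * ennreal (prob {\<omega>\<in>space M. t \<le> X \<omega>}) \<partial>lborel)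
      = ennreal (expectation Xp)" .
  have "0 \<le> expectation Xp"
    by (simp add: Xp_def)
  note set_integral_eq_if_nn_integral_eq[OF borel_measurable_prob_ge[OF Xm] _ _ this eq]
  then show "set_integrable lborel {0<..} (\<lambda>t. prob {\<omega>\<in>space M. t \<le> X \<omega>})"
    "(LINT t:{0<..}|lborel. prob {\<omega>\<in>space M. t \<le> X \<omega>}) = expectation (\<lambda>\<omega>. max 0 (X \<omega>))"
    by (auto simp: Xp_def)
qed

lemma set_integrable_Iio_reflect:
  fixes f :: "real \<Rightarrow> real"
  shows "set_integrable lborel {..<0} f \<longleftrightarrow> set_integrable lborel {0<..} (\<lambda>t. f (- t))"
  unfolding set_integrable_def
  using lborel_integrable_real_affine_iff[of "-1" "\<lambda>t. indicator {..<0} t *\<^sub>R f t" 0]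
  by (simp add: indicator_def)

lemma (in prob_space) expectation_eq_tail_integrals:
  fixes X :: "'a \<Rightarrow> real"
  assumes X: "integrable M X"
  shows "set_integrable lborel {0<..} (\<lambda>t. prob {\<omega>\<in>space M. t \<le> X \<omega>})"
    and "set_integrable lborel {..<0} (\<lambda>t. prob {\<omega>\<in>space M. X \<omega> \<le> t})"
    and "expectation X = (LINT t:{0<..}|lborel. prob {\<omega>\<in>space M. t \<le> X \<omega>})
        - (LINT t:{..<0}|lborel. prob {\<omega>\<in>space M. X \<omega> \<le> t})"
proof -
  note pos = tail_integral_eq_expectation_pos_part[OF X]
  have "(\<lambda>t. prob {\<omega>\<in>space M. t \<le> - X \<omega>}) = (\<lambda>t. prob {\<omega>\<in>space M. X \<omega> \<le> - t})"
    by (intro ext arg_cong[where f=prob]) auto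
  note neg = tail_integral_eq_expectation_pos_part[OF integrable_minus[OF X], unfolded this]
  show "set_integrable lborel {0<..} (\<lambda>t. prob {\<omega>\<in>space M. t \<le> X \<omega>})"
    by (rule pos(1))
  show "set_integrable lborel {..<0} (\<lambda>t. prob {\<omega>\<in>space M. X \<omega> \<le> t})"
    using neg(1) by (simp add: set_integrable_Iio_reflect)
  have "{t::real. - t \<in> {..<0}} = {0<..}"
    by auto
  then have "(LINT t:{..<0}|lborel. prob {\<omega>\<in>space M. X \<omega> \<le> t}) = expectation (\<lambda>\<omega>. max 0 (- X \<omega>))"
    using neg(2) by (simp add: set_integral_reflect[of "{..<0}"])
  moreover have "expectation X = expectation (\<lambda>\<omega>. max 0 (X \<omega>)) - expectation (\<lambda>\<omega>. max 0 (- X \<omega>))"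
  proof -
    have "X = (\<lambda>\<omega>. max 0 (X \<omega>) - max 0 (- X \<omega>))"
      by (auto simp: fun_eq_iff)
    then show ?thesis
      using X by (subst Bochner_Integration.integral_diff[symmetric]) auto
  qed
  ultimately show "expectation X = (LINT t:{0<..}|lborel. prob {\<omega>\<in>space M. t \<le> X \<omega>})
      - (LINT t:{..<0}|lborel. prob {\<omega>\<in>space M. X \<omega> \<le> t})"
    using pos(2) by simp
qed

section \<open>The standard normal tail\<close>

abbreviation \<phi> :: "real \<Rightarrow> real" where
  "\<phi> \<equiv> std_normal_density"

definition \<Phi> :: "real \<Rightarrow> real" where
  "\<Phi> x = (LBINT t=-\<infinity>..ereal x. \<phi> t)"

definition Q :: "real \<Rightarrow> real" where
  "Q x = 1 - \<Phi> x"

lemma set_integrable_phi: "A \<in> sets borel \<Longrightarrow> set_integrable lborel A \<phi>"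
  unfolding set_integrable_def by (rule integrable_mult_indicator) auto

lemma phi_pos: "0 < \<phi> x"
  by (simp add: normal_density_pos)

lemma phi_has_real_derivative: "(\<phi> has_real_derivative - t * \<phi> t) (at t)"
  unfolding normal_density_def
  by (auto intro!: derivative_eq_intros simp: field_simps power2_eq_square)

lemma isCont_phi: "isCont \<phi> x"
  using phi_has_real_derivative DERIV_isCont by blast

lemma continuous_on_phi: "continuous_on A \<phi>"
  by (intro continuous_at_imp_continuous_on ballI isCont_phi)

lemma Phi_has_real_derivative: "(\<Phi> has_real_derivative \<phi> x) (at x)"
proof -
  have split: "\<Phi> u = \<Phi> (x-1) + (LBINT t=ereal (x-1)..ereal u. \<phi> t)" if "u \<in> {x-1..x+1}" for u
    unfolding \<Phi>_def using that
    by (subst interval_integral_sum[symmetric])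
       (auto simp: interval_lebesgue_integrable_def set_integrable_phi min_def max_def)
  have "((\<lambda>u. LBINT t=ereal (x-1)..ereal u. \<phi> t) has_vector_derivative \<phi> x) (at x within {x-1..x+1})"
    by (rule interval_integral_FTC2) (auto intro: continuous_on_phi)
  then have "((\<lambda>u. \<Phi> (x-1) + (LBINT t=ereal (x-1)..ereal u. \<phi> t)) has_vector_derivative \<phi> x)
      (at x within {x-1..x+1})"
    by (auto intro!: derivative_eq_intros)
  then have "(\<Phi> has_vector_derivative \<phi> x) (at x within {x-1..x+1})"
    by (rule has_vector_derivative_weaken) (auto intro: split[symmetric])
  then show ?thesis
    by (simp add: at_within_Icc_at has_real_derivative_iff_has_vector_derivative)
qed

lemma Phi_eq_set_integral: "\<Phi> x = (LINT t:{..<x}|lborel. \<phi> t)"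
  by (simp add: \<Phi>_def interval_lebesgue_integral_def einterval_def lessThan_def)

lemma Phi_eq_set_integral_atMost: "\<Phi> x = (LINT t:{..x}|lborel. \<phi> t)"
  unfolding Phi_eq_set_integral
  by (rule set_integral_cong_set)
     (use AE_lborel_singleton[of x] in \<open>auto elim!: eventually_mono simp: set_borel_measurable_def
       intro!: borel_measurable_continuous_on_indicator continuous_on_phi\<close>)

lemma Q_eq_interval_integral: "Q x = (LBINT t=ereal x..\<infinity>. \<phi> t)"
proof -
  have "\<Phi> x + (LBINT t=ereal x..\<infinity>. \<phi> t) = (LBINT t=-\<infinity>..\<infinity>. \<phi> t)"
    unfolding \<Phi>_def
    by (rule interval_integral_sum) (auto simp: interval_lebesgue_integrable_def set_integrable_phi)
  also have "\<dots> = 1"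
    by (simp add: interval_lebesgue_integral_def set_lebesgue_integral_def einterval_def)
  finally show ?thesis by (simp add: Q_def)
qed

lemma Q_eq_set_integral: "Q x = (LINT t:{x<..}|lborel. \<phi> t)"
  using Q_eq_interval_integral by (simp add: interval_integral_to_infinity_eq)

lemma Q_has_real_derivative: "(Q has_real_derivative - \<phi> x) (at x)"
  unfolding Q_def[abs_def] by (auto intro!: derivative_eq_intros Phi_has_real_derivative)

lemma isCont_Q: "isCont Q x"
  using Q_has_real_derivative DERIV_isCont by blast

lemma continuous_on_Q: "continuous_on A Q"
  by (intro continuous_at_imp_continuous_on ballI isCont_Q)

lemma Phi_minus: "\<Phi> (- x) = Q x"
proof -
  have "\<Phi> (- x) = (LBINT t=ereal x..\<infinity>. \<phi> (- t))"
    unfolding \<Phi>_def by (subst interval_integral_reflect) simp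
  also have "\<dots> = Q x"
    by (simp add: Q_eq_interval_integral normal_density_def)
  finally show ?thesis .
qed

lemma Q_minus: "Q (- x) = 1 - Q x"
  using Phi_minus[of x] by (simp add: Q_def)

lemma Q_0: "Q 0 = 1/2"
  using Q_minus[of 0] by simp

lemma Q_strict_antimono: "x < y \<Longrightarrow> Q y < Q x"
proof (rule DERIV_neg_imp_decreasing[of x y Q])
  fix z
  show "\<exists>d. (Q has_real_derivative d) (at z) \<and> d < 0"
    using Q_has_real_derivative[of z] phi_pos[of z] by (intro exI[of _ "- \<phi> z"]) simp
qed

lemma Q_antimono: "x \<le> y \<Longrightarrow> Q y \<le> Q x"
  using Q_strict_antimono[of x y] by (cases "x = y") auto

lemma Q_le_half: "0 \<le> x \<Longrightarrow> Q x \<le> 1/2"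
  using Q_antimono[of 0 x] Q_0 by simp

lemma Q_nonneg: "0 \<le> Q x"
  unfolding Q_eq_set_integral by (rule set_integral_nonneg) (simp add: less_imp_le phi_pos)

lemma Q_le_1: "Q x \<le> 1"
  using Q_minus[of "- x"] Q_nonneg[of "- x"] by simp

lemma t_phi_Ioi_integral:
  assumes "0 \<le> b"
  shows "set_integrable lborel {b<..} (\<lambda>t. t * \<phi> t)" "(LINT t:{b<..}|lborel. t * \<phi> t) = \<phi> b"
proof -
  have "((\<lambda>t. - \<phi> t) has_real_derivative t * \<phi> t) (at t)" for t
    using phi_has_real_derivative[of t] by (auto intro!: derivative_eq_intros)
  moreover have "((\<lambda>t. - \<phi> t) \<longlongrightarrow> 0) at_top"
    unfolding normal_density_def by real_asymp
  moreover have "isCont (\<lambda>t. t * \<phi> t) t" for t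
    by (intro continuous_intros isCont_phi)
  ultimately show "set_integrable lborel {b<..} (\<lambda>t. t * \<phi> t)" "(LINT t:{b<..}|lborel. t * \<phi> t) = \<phi> b"
    using FTC_Ioi_nonneg[of b "\<lambda>t. - \<phi> t" "\<lambda>t. t * \<phi> t" 0] assms phi_pos
    by (auto simp: less_imp_le)
qed

lemma Q_upper_bound:
  assumes "0 < x"
  shows "Q x \<le> \<phi> x / x"
proof -
  have "Q x \<le> (LINT t:{x<..}|lborel. (1/x) * (t * \<phi> t))"
    unfolding Q_eq_set_integral
  proof (rule set_integral_mono)
    show "set_integrable lborel {x<..} (\<lambda>t. (1/x) * (t * \<phi> t))"
      using t_phi_Ioi_integral(1)[of x] assms by (intro set_integrable_mult_right) auto
    show "\<phi> t \<le> (1/x) * (t * \<phi> t)" if "t \<in> {x<..}" for t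
      using that assms phi_pos[of t] by (auto simp: field_simps)
  qed (simp add: set_integrable_phi)
  also have "\<dots> = \<phi> x / x"
    using t_phi_Ioi_integral(2)[of x] assms by (simp add: set_integral_mult_right)
  finally show ?thesis .
qed

lemma Q_lower_bound:
  assumes "0 < x"
  shows "\<phi> x * x / (1 + x\<^sup>2) \<le> Q x"
proof -
  have "((\<lambda>t. - \<phi> t / t) has_real_derivative \<phi> t * (1 + 1/t\<^sup>2)) (at t)" if "t \<ge> x" for t
    using that assms
    by (auto intro!: derivative_eq_intros phi_has_real_derivative simp: field_simps power2_eq_square)
  moreover have "((\<lambda>t. - \<phi> t / t) \<longlongrightarrow> 0) at_top"
    unfolding normal_density_def by real_asymp
  moreover have "isCont (\<lambda>t. \<phi> t * (1 + 1/t\<^sup>2)) t" if "t > x" for t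
    using that assms by (intro continuous_intros isCont_phi) auto
  ultimately have I: "set_integrable lborel {x<..} (\<lambda>t. \<phi> t * (1 + 1/t\<^sup>2))"
    "(LINT t:{x<..}|lborel. \<phi> t * (1 + 1/t\<^sup>2)) = \<phi> x / x"
    using FTC_Ioi_nonneg[of x "\<lambda>t. - \<phi> t / t" "\<lambda>t. \<phi> t * (1 + 1/t\<^sup>2)" 0] assms phi_pos
    by (auto simp: less_imp_le)
  have "\<phi> x / x \<le> (LINT t:{x<..}|lborel. (1 + 1/x\<^sup>2) * \<phi> t)"
    unfolding I(2)[symmetric]
  proof (rule set_integral_mono[OF I(1)])
    show "set_integrable lborel {x<..} (\<lambda>t. (1 + 1/x\<^sup>2) * \<phi> t)"
      by (intro set_integrable_mult_right set_integrable_phi) auto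
    fix t assume "t \<in> {x<..}"
    then have "1/t\<^sup>2 \<le> 1/x\<^sup>2"
      using assms by (auto simp: field_simps power_mono)
    then show "\<phi> t * (1 + 1/t\<^sup>2) \<le> (1 + 1/x\<^sup>2) * \<phi> t"
      using phi_pos[of t] by (simp add: mult_left_mono mult.commute)
  qed
  also have "\<dots> = (1 + 1/x\<^sup>2) * Q x"
    by (simp add: Q_eq_set_integral set_integral_mult_right)
  finally show ?thesis
    using assms by (simp add: pos_divide_le_eq field_simps power2_eq_square add_pos_nonneg)
qed

lemma Q_tendsto_0: "(Q \<longlongrightarrow> 0) at_top"
proof (rule tendsto_sandwich[of "\<lambda>_. 0" _ _ "\<lambda>x. \<phi> x / x"])
  show "\<forall>\<^sub>F x in at_top. Q x \<le> \<phi> x / x"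
    using eventually_gt_at_top[of 0] by eventually_elim (rule Q_upper_bound)
  show "((\<lambda>x. \<phi> x / x) \<longlongrightarrow> 0) at_top"
    unfolding normal_density_def by real_asymp
qed (simp_all add: Q_nonneg)

lemma Q_phi_Ioi_integral:
  assumes "0 \<le> b"
  shows "set_integrable lborel {b<..} (\<lambda>t. Q t * \<phi> t)" "(LINT t:{b<..}|lborel. Q t * \<phi> t) = (Q b)\<^sup>2 / 2"
proof -
  have "((\<lambda>t. - ((Q t)\<^sup>2 / 2)) has_real_derivative Q t * \<phi> t) (at t)" for t
    by (auto intro!: derivative_eq_intros Q_has_real_derivative)
  moreover have "((\<lambda>t. - ((Q t)\<^sup>2 / 2)) \<longlongrightarrow> 0) at_top"
    by (auto intro!: tendsto_eq_intros Q_tendsto_0)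
  moreover have "isCont (\<lambda>t. Q t * \<phi> t) t" for t
    by (intro continuous_intros isCont_Q isCont_phi)
  ultimately show "set_integrable lborel {b<..} (\<lambda>t. Q t * \<phi> t)" "(LINT t:{b<..}|lborel. Q t * \<phi> t) = (Q b)\<^sup>2 / 2"
    using FTC_Ioi_nonneg[of b "\<lambda>t. - ((Q t)\<^sup>2 / 2)" "\<lambda>t. Q t * \<phi> t" 0] assms
    by (auto simp: Q_nonneg phi_pos less_imp_le)
qed

lemma Q_phi_exp_integral:
  assumes "0 < k" "a \<le> b"
  shows "set_integrable lborel {a<..b} (\<lambda>t. Q t * \<phi> t * exp (- k * Q t))"
    and "(LINT t:{a<..b}|lborel. Q t * \<phi> t * exp (- k * Q t))
      = (Q b / k + 1 / k\<^sup>2) * exp (- k * Q b) - (Q a / k + 1 / k\<^sup>2) * exp (- k * Q a)"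
proof -
  define G where "G t = (Q t / k + 1 / k\<^sup>2) * exp (- k * Q t)" for t
  have G': "(G has_real_derivative Q t * \<phi> t * exp (- k * Q t)) (at t)" for t
  proof -
    have "(G has_real_derivative
        - \<phi> t / k * exp (- k * Q t) + (Q t / k + 1 / k\<^sup>2) * (exp (- k * Q t) * (k * \<phi> t))) (at t)"
      unfolding G_def[abs_def] using assms by (auto intro!: derivative_eq_intros Q_has_real_derivative)
    also have "- \<phi> t / k * exp (- k * Q t) + (Q t / k + 1 / k\<^sup>2) * (exp (- k * Q t) * (k * \<phi> t))
        = Q t * \<phi> t * exp (- k * Q t)"
      using assms by (simp add: field_simps power2_eq_square)
    finally show ?thesis .
  qed
  have cont: "continuous_on {a..b} (\<lambda>t. Q t * \<phi> t * exp (- k * Q t))"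
    by (intro continuous_intros continuous_on_Q continuous_on_phi)
  then show "set_integrable lborel {a<..b} (\<lambda>t. Q t * \<phi> t * exp (- k * Q t))"
    by (rule set_integrable_subset[OF borel_integrable_atLeastAtMost']) auto
  have "(LBINT t=ereal a..ereal b. Q t * \<phi> t * exp (- k * Q t)) = G b - G a"
    using assms cont
    by (intro interval_integral_FTC_finite has_field_derivative_at_within[OF G', THEN
          iffD1[OF has_real_derivative_iff_has_vector_derivative]]) (auto simp: min_def max_def)
  then show "(LINT t:{a<..b}|lborel. Q t * \<phi> t * exp (- k * Q t))
      = (Q b / k + 1 / k\<^sup>2) * exp (- k * Q b) - (Q a / k + 1 / k\<^sup>2) * exp (- k * Q a)"
    using assms by (simp add: interval_integral_Ioc G_def)
qed

lemma Q_phi_exp_integral_le: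
  assumes "0 < k" "0 < a" "a \<le> b"
  shows "(LINT t:{a<..b}|lborel. Q t * \<phi> t * exp (- k * Q t)) \<le> \<phi> b / b / k + 1 / k\<^sup>2"
proof -
  have "(Q b / k + 1 / k\<^sup>2) * exp (- k * Q b) \<le> Q b / k + 1 / k\<^sup>2"
    using assms Q_nonneg[of b] by (intro mult_left_le) auto
  also have "\<dots> \<le> \<phi> b / b / k + 1 / k\<^sup>2"
    using divide_right_mono[OF Q_upper_bound[of b], of k] assms by simp
  moreover have "0 \<le> (Q a / k + 1 / k\<^sup>2) * exp (- k * Q a)"
    using assms Q_nonneg[of a] by simp
  ultimately show ?thesis
    using Q_phi_exp_integral(2)[of k a b] assms by simp
qed

lemma Q_phi_exp_integral_ge:
  assumes "0 < k" "0 < a" "a \<le> b"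
  shows "exp (- (k * (\<phi> b / b))) / k\<^sup>2 - (1 / (2 * k) + 1 / k\<^sup>2) * exp (- (k * (\<phi> a * a / (1 + a\<^sup>2))))
    \<le> (LINT t:{a<..b}|lborel. Q t * \<phi> t * exp (- k * Q t))"
proof -
  have "k * Q b \<le> k * (\<phi> b / b)"
    using Q_upper_bound[of b] assms by (intro mult_left_mono) auto
  then have "exp (- (k * (\<phi> b / b))) / k\<^sup>2 \<le> exp (- k * Q b) / k\<^sup>2"
    by (intro divide_right_mono) auto
  also have "\<dots> \<le> (Q b / k + 1 / k\<^sup>2) * exp (- k * Q b)"
    using assms Q_nonneg[of b] by (simp add: field_simps)
  finally have "exp (- (k * (\<phi> b / b))) / k\<^sup>2 \<le> (Q b / k + 1 / k\<^sup>2) * exp (- k * Q b)" .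
  moreover have "(Q a / k + 1 / k\<^sup>2) * exp (- k * Q a) \<le> (1 / (2 * k) + 1 / k\<^sup>2) * exp (- (k * (\<phi> a * a / (1 + a\<^sup>2))))"
  proof (rule mult_mono)
    show "Q a / k + 1 / k\<^sup>2 \<le> 1 / (2 * k) + 1 / k\<^sup>2"
      using Q_le_half[of a] assms by (simp add: field_simps)
    have "k * (\<phi> a * a / (1 + a\<^sup>2)) \<le> k * Q a"
      using Q_lower_bound[of a] assms by (intro mult_left_mono) auto
    then show "exp (- k * Q a) \<le> exp (- (k * (\<phi> a * a / (1 + a\<^sup>2))))"
      by simp
  qed (use assms in auto)
  ultimately show ?thesis
    using Q_phi_exp_integral(2)[of k a b] assms by simp
qed

section \<open>Bounds for the tail integrals\<close>

text \<open>For iid standard normals, \<open>max_tail m t\<close> is the probability that the maximum of \<open>m\<close> of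
  them is at least \<open>t\<close>; for \<open>t > 0\<close>, \<open>tail_gap n t\<close> is the amount by which the corresponding
  probability for the maximum of \<open>n\<close> absolute values exceeds \<open>max_tail (2*n) t\<close>.\<close>

definition max_tail :: "nat \<Rightarrow> real \<Rightarrow> real" where
  "max_tail m t = 1 - (1 - Q t) ^ m"

definition tail_gap :: "nat \<Rightarrow> real \<Rightarrow> real" where
  "tail_gap n t = (1 - Q t) ^ (2*n) - (1 - 2 * Q t) ^ n"

definition tail_gap_upper :: "real \<Rightarrow> real \<Rightarrow> real \<Rightarrow> real" where
  "tail_gap_upper n a b = a * exp (- (2 * n * (\<phi> a * a / (1 + a\<^sup>2))))
     + n / a * (\<phi> b / b / (2*n - 2) + 1 / (2*n - 2)\<^sup>2) + n / b * ((\<phi> b / b)\<^sup>2 / 2)"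

definition tail_gap_lower :: "real \<Rightarrow> real \<Rightarrow> real \<Rightarrow> real" where
  "tail_gap_lower n a b = exp (- (8 * n * (\<phi> a / a)\<^sup>2)) * (b / (1 + b\<^sup>2)) * n *
     (exp (- (2 * n * (\<phi> b / b))) / (2*n)\<^sup>2 - (1 / (4*n) + 1 / (2*n)\<^sup>2) * exp (- (2 * n * (\<phi> a * a / (1 + a\<^sup>2)))))"

lemma tail_gap_nonneg: "0 < t \<Longrightarrow> 1 \<le> n \<Longrightarrow> 0 \<le> tail_gap n t"
  unfolding tail_gap_def using Q_le_half[of t] Q_nonneg[of t] by (intro power_gap_nonneg) auto

lemma max_tail_nonneg: "0 < t \<Longrightarrow> 0 \<le> max_tail m t"
  unfolding max_tail_def using Q_le_half[of t] Q_nonneg[of t] by (simp add: power_le_one)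

lemma tail_gap_le_exp:
  assumes "0 < t"
  shows "tail_gap n t \<le> exp (- (2 * real n * Q t))"
proof -
  have "0 \<le> (1 - 2 * Q t) ^ n"
    using assms Q_le_half[of t] by simp
  then have "tail_gap n t \<le> (1 - Q t) ^ (2*n)"
    by (simp add: tail_gap_def)
  also have "\<dots> \<le> exp (- (2 * real n * Q t))"
    using one_minus_power_le_exp[of "Q t" "2*n"] assms Q_le_half[of t] by simp
  finally show ?thesis .
qed

lemma tail_gap_le_Q_phi_exp:
  assumes "2 \<le> n" "0 < a" "a \<le> t"
  shows "tail_gap n t \<le> real n / a * (Q t * \<phi> t * exp (- (2 * real n - 2) * Q t))"
proof -
  have "tail_gap n t \<le> real n * (Q t)\<^sup>2 * exp (- ((2 * real n - 2) * Q t))"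
    unfolding tail_gap_def using assms Q_le_half[of t] Q_nonneg[of t] by (intro power_gap_le_exp) auto
  also have "\<dots> = real n * Q t * exp (- (2 * real n - 2) * Q t) * Q t"
    by (simp add: power2_eq_square algebra_simps)
  also have "\<dots> \<le> real n * Q t * exp (- (2 * real n - 2) * Q t) * (\<phi> t / a)"
  proof (rule mult_left_mono)
    have "Q t \<le> \<phi> t / t"
      using assms by (intro Q_upper_bound) auto
    also have "\<dots> \<le> \<phi> t / a"
      using assms phi_pos[of t] by (intro divide_left_mono) auto
    finally show "Q t \<le> \<phi> t / a" .
  qed (simp add: Q_nonneg)
  finally show ?thesis
    by (simp add: mult_ac)
qed

lemma tail_gap_le_Q_phi:
  assumes "1 \<le> n" "0 < b" "b \<le> t"
  shows "tail_gap n t \<le> real n / b * (Q t * \<phi> t)"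
proof -
  have "(1 - Q t) ^ (2*n - 2) \<le> 1"
    using Q_nonneg[of t] Q_le_half[of t] assms by (intro power_le_one) auto
  then have "real n * (Q t)\<^sup>2 * (1 - Q t) ^ (2*n - 2) \<le> real n * (Q t)\<^sup>2"
    by (intro mult_left_le) auto
  then have "tail_gap n t \<le> real n * (Q t)\<^sup>2"
    unfolding tail_gap_def using assms Q_le_half[of t] Q_nonneg[of t] power_gap_bounds(2)[of "Q t" n]
    by linarith
  also have "\<dots> = real n * Q t * Q t"
    by (simp add: power2_eq_square)
  also have "\<dots> \<le> real n * Q t * (\<phi> t / b)"
  proof (rule mult_left_mono)
    have "Q t \<le> \<phi> t / t"
      using assms by (intro Q_upper_bound) auto
    also have "\<dots> \<le> \<phi> t / b"
      using assms phi_pos[of t] by (intro divide_left_mono) auto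
    finally show "Q t \<le> \<phi> t / b" .
  qed (simp add: Q_nonneg)
  finally show ?thesis
    by (simp add: mult_ac)
qed

lemma tail_gap_ge_Q_phi_exp:
  assumes "1 \<le> n" "1 \<le> a" "a \<le> t" "t \<le> b" "\<phi> a / a \<le> 1/4"
  shows "exp (- (8 * real n * (\<phi> a / a)\<^sup>2)) * (b / (1 + b\<^sup>2)) * real n * (Q t * \<phi> t * exp (- (2 * real n) * Q t))
    \<le> tail_gap n t"
proof -
  have Qt: "Q t \<le> \<phi> a / a"
    using Q_antimono[of a t] Q_upper_bound[of a] assms by auto
  have "exp (- (8 * real n * (\<phi> a / a)\<^sup>2)) \<le> exp (- (8 * real n * (Q t)\<^sup>2))"
    using Qt Q_nonneg[of t] by (simp add: power_mono mult_left_mono)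
  moreover have "\<phi> t * (b / (1 + b\<^sup>2)) \<le> \<phi> t * (t / (1 + t\<^sup>2))"
    using divide_one_plus_square_antimono[of t b] assms phi_pos[of t] by (intro mult_left_mono) auto
  then have "\<phi> t * (b / (1 + b\<^sup>2)) \<le> Q t"
    using Q_lower_bound[of t] assms by simp
  ultimately have "exp (- (8 * real n * (\<phi> a / a)\<^sup>2)) * (\<phi> t * (b / (1 + b\<^sup>2)))
      \<le> exp (- (8 * real n * (Q t)\<^sup>2)) * Q t"
    using assms phi_pos[of t] by (intro mult_mono) auto
  then have "real n * Q t * exp (- (2 * real n) * Q t) * (exp (- (8 * real n * (\<phi> a / a)\<^sup>2)) * (\<phi> t * (b / (1 + b\<^sup>2))))
      \<le> real n * Q t * exp (- (2 * real n) * Q t) * (exp (- (8 * real n * (Q t)\<^sup>2)) * Q t)"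
    using Q_nonneg[of t] by (intro mult_left_mono) auto
  also have "\<dots> = real n * (Q t)\<^sup>2 * exp (- (2 * real n * Q t + 8 * real n * (Q t)\<^sup>2))"
    by (simp add: exp_add[symmetric] power2_eq_square algebra_simps)
  also have "\<dots> \<le> tail_gap n t"
    unfolding tail_gap_def using assms Q_nonneg[of t] order_trans[OF Qt assms(5)] by (intro power_gap_ge_exp)
  finally show ?thesis
    by (simp add: algebra_simps)
qed

lemma tail_gap_integral_le:
  assumes n: "2 \<le> n" and ab: "1 \<le> a" "a \<le> b" and int: "set_integrable lborel {0<..} (tail_gap n)"
  shows "(LINT t:{0<..}|lborel. tail_gap n t) \<le> tail_gap_upper n a b"
proof -
  define k where "k = 2 * real n - 2"
  have k: "0 < k" and a: "0 < a" and b: "0 < b"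
    using n ab by (auto simp: k_def)
  note split = set_integral_Ioi_split[OF a ab(2) int]
  have "(LINT t:{0<..a}|lborel. tail_gap n t) \<le> (LINT t:{0<..a}|lborel. exp (- (2 * real n * (\<phi> a * a / (1 + a\<^sup>2)))))"
  proof (rule set_integral_mono[OF split(1)])
    fix t assume t: "t \<in> {0<..a}"
    have "2 * real n * (\<phi> a * a / (1 + a\<^sup>2)) \<le> 2 * real n * Q t"
      using Q_lower_bound[OF a] Q_antimono[of t a] t by (intro mult_left_mono) auto
    then have "exp (- (2 * real n * Q t)) \<le> exp (- (2 * real n * (\<phi> a * a / (1 + a\<^sup>2))))"
      by (simp only: exp_le_cancel_iff neg_le_iff_le)
    with tail_gap_le_exp[of t n] t show "tail_gap n t \<le> exp (- (2 * real n * (\<phi> a * a / (1 + a\<^sup>2))))"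
      by (auto intro: order_trans)
  qed (auto intro: set_integrable_subset[OF borel_integrable_atLeastAtMost'[of 0 a]])
  then have lo: "(LINT t:{0<..a}|lborel. tail_gap n t) \<le> a * exp (- (2 * real n * (\<phi> a * a / (1 + a\<^sup>2))))"
    using a by (simp add: set_integral_const)
  have "(LINT t:{a<..b}|lborel. tail_gap n t) \<le> (LINT t:{a<..b}|lborel. real n / a * (Q t * \<phi> t * exp (- k * Q t)))"
    unfolding k_def using n a
    by (intro set_integral_mono[OF split(2)] set_integrable_mult_right Q_phi_exp_integral tail_gap_le_Q_phi_exp ab) auto
  also have "\<dots> = real n / a * (LINT t:{a<..b}|lborel. Q t * \<phi> t * exp (- k * Q t))"
    by (simp add: set_integral_mult_right)
  also have "\<dots> \<le> real n / a * (\<phi> b / b / k + 1 / k\<^sup>2)"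
    using Q_phi_exp_integral_le[OF k a ab(2)] a by (intro mult_left_mono) auto
  finally have mid: "(LINT t:{a<..b}|lborel. tail_gap n t) \<le> real n / a * (\<phi> b / b / k + 1 / k\<^sup>2)" .
  have "(LINT t:{b<..}|lborel. tail_gap n t) \<le> (LINT t:{b<..}|lborel. real n / b * (Q t * \<phi> t))"
    using n b Q_phi_Ioi_integral(1)[of b]
    by (intro set_integral_mono[OF split(3)] set_integrable_mult_right tail_gap_le_Q_phi) auto
  also have "\<dots> = real n / b * ((Q b)\<^sup>2 / 2)"
    using b by (simp only: set_integral_mult_right Q_phi_Ioi_integral(2))
  also have "\<dots> \<le> real n / b * ((\<phi> b / b)\<^sup>2 / 2)"
    using Q_upper_bound[OF b] Q_nonneg[of b] b by (intro mult_left_mono divide_right_mono power_mono) auto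
  finally have hi: "(LINT t:{b<..}|lborel. tail_gap n t) \<le> real n / b * ((\<phi> b / b)\<^sup>2 / 2)" .
  show ?thesis
    using split(4) lo mid hi by (simp add: tail_gap_upper_def k_def)
qed

lemma tail_gap_integral_ge:
  assumes n: "1 \<le> n" and ab: "1 \<le> a" "a \<le> b" "\<phi> a / a \<le> 1/4"
    and int: "set_integrable lborel {0<..} (tail_gap n)"
  shows "tail_gap_lower n a b \<le> (LINT t:{0<..}|lborel. tail_gap n t)"
proof -
  define k where "k = 2 * real n"
  define c where "c = exp (- (8 * real n * (\<phi> a / a)\<^sup>2)) * (b / (1 + b\<^sup>2)) * real n"
  have k: "0 < k" and a: "0 < a" and b: "0 < b" and c: "0 \<le> c"
    using n ab by (auto simp: k_def c_def)
  note split = set_integral_Ioi_split[OF a ab(2) int]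
  have "tail_gap_lower n a b \<le> c * (LINT t:{a<..b}|lborel. Q t * \<phi> t * exp (- k * Q t))"
    unfolding tail_gap_lower_def c_def[symmetric]
    using mult_left_mono[OF Q_phi_exp_integral_ge[OF k a ab(2)] c] by (simp add: k_def)
  also have "\<dots> = (LINT t:{a<..b}|lborel. c * (Q t * \<phi> t * exp (- k * Q t)))"
    by (simp add: set_integral_mult_right)
  also have "\<dots> \<le> (LINT t:{a<..b}|lborel. tail_gap n t)"
    unfolding c_def k_def using n ab
    by (intro set_integral_mono[OF _ split(2)] set_integrable_mult_right Q_phi_exp_integral tail_gap_ge_Q_phi_exp) auto
  also have "\<dots> \<le> (LINT t:{0<..}|lborel. tail_gap n t)"
    using split(4) set_integral_nonneg[of "{0<..a}" "tail_gap n"] set_integral_nonneg[of "{b<..}" "tail_gap n"]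
      tail_gap_nonneg n a b by simp
  finally show ?thesis .
qed

lemma max_tail_integral_le:
  assumes b: "0 < b" and int: "set_integrable lborel {0<..} (max_tail m)"
  shows "(LINT t:{0<..}|lborel. max_tail m t) \<le> b + m * \<phi> b / b\<^sup>2"
proof -
  note split = set_integral_Ioi_split[OF b order_refl int]
  have "(LINT t:{0<..b}|lborel. max_tail m t) \<le> (LINT t:{0<..b}|lborel. 1)"
    using Q_nonneg Q_le_1 by (intro set_integral_mono[OF split(1)])
      (auto simp: max_tail_def intro: set_integrable_subset[OF borel_integrable_atLeastAtMost'[of 0 b]])
  also have "\<dots> = b"
    using b by (simp add: set_integral_const)
  finally have lo: "(LINT t:{0<..b}|lborel. max_tail m t) \<le> b" .
  have "(LINT t:{b<..}|lborel. max_tail m t) \<le> (LINT t:{b<..}|lborel. m / b\<^sup>2 * (t * \<phi> t))"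
  proof (rule set_integral_mono[OF split(3)])
    show "set_integrable lborel {b<..} (\<lambda>t. m / b\<^sup>2 * (t * \<phi> t))"
      using t_phi_Ioi_integral(1)[of b] b by (intro set_integrable_mult_right) auto
    fix t assume t: "t \<in> {b<..}"
    then have t0: "0 < t"
      using b by auto
    have "max_tail m t \<le> m * Q t"
      using Bernoulli_inequality[of "- Q t" m] Q_nonneg[of t] Q_le_half[of t] t0
      by (simp add: max_tail_def)
    also have "\<dots> \<le> m * (\<phi> t / t)"
      using Q_upper_bound[OF t0] by (intro mult_left_mono) auto
    also have "\<dots> \<le> m / b\<^sup>2 * (t * \<phi> t)"
    proof -
      have "b\<^sup>2 * \<phi> t \<le> t\<^sup>2 * \<phi> t"
        using t b phi_pos[of t] by (intro mult_right_mono power_mono) auto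
      then have "\<phi> t / t \<le> t * \<phi> t / b\<^sup>2"
        using t0 b by (simp add: field_simps power2_eq_square)
      then show ?thesis
        using mult_left_mono[of "\<phi> t / t" "t * \<phi> t / b\<^sup>2" m] by simp
    qed
    finally show "max_tail m t \<le> m / b\<^sup>2 * (t * \<phi> t)" .
  qed
  also have "\<dots> = m * \<phi> b / b\<^sup>2"
    using b by (simp only: set_integral_mult_right t_phi_Ioi_integral(2)) simp
  finally have hi: "(LINT t:{b<..}|lborel. max_tail m t) \<le> m * \<phi> b / b\<^sup>2" .
  show ?thesis
    using split(4) lo hi by (simp add: set_lebesgue_integral_def)
qed

lemma max_tail_integral_ge:
  assumes a: "0 < a" and int: "set_integrable lborel {0<..} (max_tail m)"
  shows "a * (1 - exp (- (m * (\<phi> a * a / (1 + a\<^sup>2))))) \<le> (LINT t:{0<..}|lborel. max_tail m t)"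
proof -
  note split = set_integral_Ioi_split[OF a order_refl int]
  have "a * (1 - exp (- (m * (\<phi> a * a / (1 + a\<^sup>2))))) = (LINT t:{0<..a}|lborel. 1 - exp (- (m * (\<phi> a * a / (1 + a\<^sup>2)))))"
    using a by (simp add: set_integral_const)
  also have "\<dots> \<le> (LINT t:{0<..a}|lborel. max_tail m t)"
  proof (rule set_integral_mono[OF _ split(1)])
    fix t assume t: "t \<in> {0<..a}"
    have "m * (\<phi> a * a / (1 + a\<^sup>2)) \<le> m * Q t"
      using Q_lower_bound[OF a] Q_antimono[of t a] t by (intro mult_left_mono) auto
    then have "1 - exp (- (m * (\<phi> a * a / (1 + a\<^sup>2)))) \<le> 1 - exp (- (m * Q t))"
      by simp
    also have "\<dots> \<le> max_tail m t"
      using one_minus_power_le_exp[of "Q t" m] t Q_le_half[of t] by (simp add: max_tail_def)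
    finally show "1 - exp (- (m * (\<phi> a * a / (1 + a\<^sup>2)))) \<le> max_tail m t" .
  qed (auto intro: set_integrable_subset[OF borel_integrable_atLeastAtMost'[of 0 a]])
  also have "\<dots> \<le> (LINT t:{0<..}|lborel. max_tail m t)"
    using split(4) set_integral_nonneg[of "{a<..}" "max_tail m"] a max_tail_nonneg
    by (simp add: set_lebesgue_integral_def)
  finally show ?thesis .
qed

section \<open>Asymptotics of the tail integrals\<close>

definition lower_cutoff :: "real \<Rightarrow> real" where
  "lower_cutoff x = sqrt (2 * ln x - 8 * ln (ln x))"

definition upper_cutoff :: "real \<Rightarrow> real" where
  "upper_cutoff x = sqrt (2 * ln x + 2 * ln (ln x))"

lemma tail_gap_upper_asymp:
  "((\<lambda>x. 4 * x * sqrt (2 * ln x) * tail_gap_upper x (lower_cutoff x) (upper_cutoff x)) \<longlongrightarrow> 1) at_top"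
  unfolding tail_gap_upper_def lower_cutoff_def upper_cutoff_def normal_density_def
  by (simp add: real_sqrt_pow2_abs) real_asymp

lemma tail_gap_lower_asymp:
  "((\<lambda>x. 4 * x * sqrt (2 * ln x) * tail_gap_lower x (lower_cutoff x) (upper_cutoff x)) \<longlongrightarrow> 1) at_top"
  unfolding tail_gap_lower_def lower_cutoff_def upper_cutoff_def normal_density_def
  by (simp add: real_sqrt_pow2_abs) (real_asymp simp add: powr_add [symmetric])

lemma max_tail_upper_asymp:
  "((\<lambda>x. (upper_cutoff x + 2 * x * \<phi> (upper_cutoff x) / (upper_cutoff x)\<^sup>2) / sqrt (2 * ln x)) \<longlongrightarrow> 1) at_top"
  unfolding upper_cutoff_def normal_density_def
  by (simp add: real_sqrt_pow2_abs) real_asymp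

lemma max_tail_lower_asymp:
  "((\<lambda>x. lower_cutoff x * (1 - exp (- (2 * x * (\<phi> (lower_cutoff x) * lower_cutoff x / (1 + (lower_cutoff x)\<^sup>2)))))
      / sqrt (2 * ln x)) \<longlongrightarrow> 1) at_top"
  unfolding lower_cutoff_def normal_density_def
  by (simp add: real_sqrt_pow2_abs) real_asymp

lemma eventually_cutoffs:
  "\<forall>\<^sub>F x in at_top. 2 \<le> (x::real) \<and> 1 \<le> lower_cutoff x \<and> lower_cutoff x \<le> upper_cutoff x
     \<and> \<phi> (lower_cutoff x) / lower_cutoff x \<le> 1/4"
proof (intro eventually_conj)
  show "\<forall>\<^sub>F x in at_top. 2 \<le> (x::real)"
    by (rule eventually_ge_at_top)
  show "\<forall>\<^sub>F x in at_top. 1 \<le> lower_cutoff x"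
    unfolding lower_cutoff_def by real_asymp
  show "\<forall>\<^sub>F x in at_top. lower_cutoff x \<le> upper_cutoff x"
    unfolding lower_cutoff_def upper_cutoff_def by real_asymp
  show "\<forall>\<^sub>F x in at_top. \<phi> (lower_cutoff x) / lower_cutoff x \<le> 1/4"
    unfolding lower_cutoff_def normal_density_def by (simp add: real_sqrt_pow2_abs) real_asymp
qed

lemma eventually_cutoffs_sequentially:
  "\<forall>\<^sub>F n in sequentially. 2 \<le> real n \<and> 1 \<le> lower_cutoff n \<and> lower_cutoff n \<le> upper_cutoff n
     \<and> \<phi> (lower_cutoff n) / lower_cutoff n \<le> 1/4"
  by (rule eventually_compose_filterlim[OF eventually_cutoffs filterlim_real_sequentially])

lemma tail_gap_integral_asymp:
  assumes "\<And>n. 1 \<le> n \<Longrightarrow> set_integrable lborel {0<..} (tail_gap n)"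
  shows "((\<lambda>n. 4 * real n * sqrt (2 * ln n) * (LINT t:{0<..}|lborel. tail_gap n t)) \<longlongrightarrow> 1) sequentially"
proof (rule tendsto_sandwich)
  let ?c = "\<lambda>x. 4 * x * sqrt (2 * ln x)"
  show "\<forall>\<^sub>F n in sequentially. ?c n * tail_gap_lower n (lower_cutoff n) (upper_cutoff n)
      \<le> ?c n * (LINT t:{0<..}|lborel. tail_gap n t)"
    using eventually_cutoffs_sequentially by eventually_elim (intro mult_left_mono tail_gap_integral_ge assms, auto)
  show "\<forall>\<^sub>F n in sequentially. ?c n * (LINT t:{0<..}|lborel. tail_gap n t)
      \<le> ?c n * tail_gap_upper n (lower_cutoff n) (upper_cutoff n)"
    using eventually_cutoffs_sequentially by eventually_elim (intro mult_left_mono tail_gap_integral_le assms, auto)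
  show "((\<lambda>n. ?c n * tail_gap_lower n (lower_cutoff n) (upper_cutoff n)) \<longlongrightarrow> 1) sequentially"
    by (rule filterlim_compose[OF tail_gap_lower_asymp filterlim_real_sequentially])
  show "((\<lambda>n. ?c n * tail_gap_upper n (lower_cutoff n) (upper_cutoff n)) \<longlongrightarrow> 1) sequentially"
    by (rule filterlim_compose[OF tail_gap_upper_asymp filterlim_real_sequentially])
qed

lemma max_tail_integral_asymp:
  assumes "\<And>n. 1 \<le> n \<Longrightarrow> set_integrable lborel {0<..} (max_tail (2*n))"
  shows "((\<lambda>n. (LINT t:{0<..}|lborel. max_tail (2*n) t) / sqrt (2 * ln n)) \<longlongrightarrow> 1) sequentially"
proof (rule tendsto_sandwich)
  show "\<forall>\<^sub>F n in sequentially.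
      lower_cutoff n * (1 - exp (- (2 * real n * (\<phi> (lower_cutoff n) * lower_cutoff n / (1 + (lower_cutoff n)\<^sup>2)))))
        / sqrt (2 * ln n) \<le> (LINT t:{0<..}|lborel. max_tail (2*n) t) / sqrt (2 * ln n)"
    using eventually_cutoffs_sequentially
  proof eventually_elim
    case (elim n)
    then show ?case
      using max_tail_integral_ge[of "lower_cutoff n" "2*n"] assms[of n] by (intro divide_right_mono) auto
  qed
  show "\<forall>\<^sub>F n in sequentially. (LINT t:{0<..}|lborel. max_tail (2*n) t) / sqrt (2 * ln n)
      \<le> (upper_cutoff n + 2 * real n * \<phi> (upper_cutoff n) / (upper_cutoff n)\<^sup>2) / sqrt (2 * ln n)"
    using eventually_cutoffs_sequentially
  proof eventually_elim
    case (elim n)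
    then show ?case
      using max_tail_integral_le[of "upper_cutoff n" "2*n"] assms[of n] by (intro divide_right_mono) auto
  qed
qed (rule filterlim_compose[OF _ filterlim_real_sequentially], rule max_tail_lower_asymp max_tail_upper_asymp)+

lemma geometrically_bounded_negligible:
  fixes N :: "nat \<Rightarrow> real"
  assumes "\<forall>\<^sub>F n in sequentially. 0 \<le> N n \<and> N n \<le> C * (1/4) ^ n"
  shows "((\<lambda>n. 4 * real n * sqrt (2 * ln n) * N n) \<longlongrightarrow> 0) sequentially"
    and "((\<lambda>n. N n / sqrt (2 * ln n)) \<longlongrightarrow> 0) sequentially"
proof -
  have ln_nonneg: "0 \<le> ln (real n)" for n
    by (cases n) simp_all
  show "((\<lambda>n. 4 * real n * sqrt (2 * ln n) * N n) \<longlongrightarrow> 0) sequentially"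
  proof (rule tendsto_sandwich[of "\<lambda>_. 0" _ _ "\<lambda>n. 4 * real n * sqrt (2 * ln n) * (C * (1/4) ^ n)"])
    show "((\<lambda>n. 4 * real n * sqrt (2 * ln n) * (C * (1/4) ^ n)) \<longlongrightarrow> 0) sequentially"
      by real_asymp
    show "\<forall>\<^sub>F n in sequentially. 4 * real n * sqrt (2 * ln n) * N n \<le> 4 * real n * sqrt (2 * ln n) * (C * (1/4) ^ n)"
      using assms by eventually_elim (auto simp: ln_nonneg intro!: mult_left_mono)
  qed (use assms ln_nonneg in \<open>auto elim!: eventually_mono\<close>)
  show "((\<lambda>n. N n / sqrt (2 * ln n)) \<longlongrightarrow> 0) sequentially"
  proof (rule tendsto_sandwich[of "\<lambda>_. 0" _ _ "\<lambda>n. C * (1/4) ^ n / sqrt (2 * ln n)"])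
    show "((\<lambda>n. C * (1/4) ^ n / sqrt (2 * ln n)) \<longlongrightarrow> 0) sequentially"
      by real_asymp
    show "\<forall>\<^sub>F n in sequentially. N n / sqrt (2 * ln n) \<le> C * (1/4) ^ n / sqrt (2 * ln n)"
      using assms by eventually_elim (auto simp: ln_nonneg intro!: divide_right_mono)
  qed (use assms ln_nonneg in \<open>auto elim!: eventually_mono\<close>)
qed

section \<open>Maxima of independent standard normals\<close>

locale iid_std_normal = prob_space M for M :: "'a measure" +
  fixes \<eta> :: "nat \<Rightarrow> 'a \<Rightarrow> real"
  assumes indep: "indep_vars (\<lambda>_. borel) \<eta> {1..}"
    and distr: "\<And>i. 1 \<le> i \<Longrightarrow> distributed M lborel (\<eta> i) \<phi>"
begin

definition max_eta :: "nat \<Rightarrow> 'a \<Rightarrow> real" where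
  "max_eta m \<omega> = Max ((\<lambda>i. \<eta> i \<omega>) ` {1..m})"

definition max_abs_eta :: "nat \<Rightarrow> 'a \<Rightarrow> real" where
  "max_abs_eta n \<omega> = Max ((\<lambda>i. \<bar>\<eta> i \<omega>\<bar>) ` {1..n})"

lemma measurable_eta [measurable]: "1 \<le> i \<Longrightarrow> \<eta> i \<in> borel_measurable M"
  using distributed_measurable[OF distr] by simp

lemma measurable_max_eta [measurable]: "max_eta m \<in> borel_measurable M"
  unfolding max_eta_def by measurable

lemma measurable_max_abs_eta [measurable]: "max_abs_eta n \<in> borel_measurable M"
  unfolding max_abs_eta_def by measurable

lemma integrable_eta: "1 \<le> i \<Longrightarrow> integrable M (\<eta> i)"
  using distributed_integrable[OF distr, of i "\<lambda>x. x"] integrable_std_normal_moment[of 1] by simp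

lemma integrable_max_eta: "1 \<le> m \<Longrightarrow> integrable M (max_eta m)"
  unfolding max_eta_def[abs_def] by (intro integrable_Max integrable_eta) auto

lemma integrable_max_abs_eta: "1 \<le> n \<Longrightarrow> integrable M (max_abs_eta n)"
  unfolding max_abs_eta_def[abs_def] by (intro integrable_Max integrable_abs integrable_eta) auto

lemma prob_eta_vimage:
  assumes "1 \<le> i" "A \<in> sets borel"
  shows "prob (\<eta> i -` A \<inter> space M) = (LINT x:A|lborel. \<phi> x)"
proof -
  have "emeasure M (\<eta> i -` A \<inter> space M) = (\<integral>\<^sup>+x. ennreal (\<phi> x) * indicator A x \<partial>lborel)"
    using distributed_emeasure[OF distr[OF assms(1)], of A] assms(2) by simp
  also have "\<dots> = (\<integral>\<^sup>+x. ennreal (indicator A x * \<phi> x) \<partial>lborel)"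
    by (rule nn_integral_cong) (simp split: split_indicator)
  also have "\<dots> = ennreal (LINT x:A|lborel. \<phi> x)"
    unfolding set_lebesgue_integral_def using set_integrable_phi[OF assms(2)]
    by (simp, intro nn_integral_eq_integral) (auto simp: set_integrable_def)
  finally show ?thesis
    by (simp add: emeasure_eq_measure set_lebesgue_integral_def)
qed

lemma prob_eta_less: "1 \<le> i \<Longrightarrow> prob (\<eta> i -` {..<t} \<inter> space M) = \<Phi> t"
  by (simp add: prob_eta_vimage Phi_eq_set_integral)

lemma prob_eta_atMost: "1 \<le> i \<Longrightarrow> prob (\<eta> i -` {..t} \<inter> space M) = \<Phi> t"
  by (simp add: prob_eta_vimage Phi_eq_set_integral_atMost)

lemma prob_abs_eta_less:
  assumes "1 \<le> i" "0 < t"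
  shows "prob (\<eta> i -` {-t<..<t} \<inter> space M) = 1 - 2 * Q t"
proof -
  have "\<Phi> t = (LINT x:{..-t} \<union> {-t<..<t}|lborel. \<phi> x)"
    unfolding Phi_eq_set_integral
    by (rule arg_cong[where f="\<lambda>A. set_lebesgue_integral lborel A \<phi>"]) (use assms in auto)
  also have "\<dots> = \<Phi> (-t) + (LINT x:{-t<..<t}|lborel. \<phi> x)"
    by (subst set_integral_Un) (auto simp: set_integrable_phi Phi_eq_set_integral_atMost)
  finally show ?thesis
    using assms by (simp add: prob_eta_vimage Phi_minus Q_def)
qed

lemma prob_INT_eta_vimage:
  assumes "finite I" "I \<noteq> {}" "I \<subseteq> {1..}" "S \<in> sets borel"
  shows "prob (\<Inter>i\<in>I. \<eta> i -` S \<inter> space M) = (\<Prod>i\<in>I. prob (\<eta> i -` S \<inter> space M))"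
  by (rule indep_varsD[OF indep]) (use assms in auto)

lemma prob_max_eta_le:
  assumes "1 \<le> m"
  shows "prob {\<omega>\<in>space M. max_eta m \<omega> \<le> t} = \<Phi> t ^ m"
proof -
  have "{\<omega>\<in>space M. max_eta m \<omega> \<le> t} = (\<Inter>i\<in>{1..m}. \<eta> i -` {..t} \<inter> space M)"
    using assms by (auto simp: max_eta_def)
  then show ?thesis
    using prob_INT_eta_vimage[of "{1..m}" "{..t}"] assms by (simp add: prob_eta_atMost)
qed

lemma prob_max_eta_ge:
  assumes "1 \<le> m"
  shows "prob {\<omega>\<in>space M. t \<le> max_eta m \<omega>} = max_tail m t"
proof -
  have "{\<omega>\<in>space M. max_eta m \<omega> < t} = (\<Inter>i\<in>{1..m}. \<eta> i -` {..<t} \<inter> space M)"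
    using assms by (auto simp: max_eta_def)
  then have "prob {\<omega>\<in>space M. max_eta m \<omega> < t} = \<Phi> t ^ m"
    using prob_INT_eta_vimage[of "{1..m}" "{..<t}"] assms by (simp add: prob_eta_less)
  moreover have "{\<omega>\<in>space M. t \<le> max_eta m \<omega>} = space M - {\<omega>\<in>space M. max_eta m \<omega> < t}"
    by auto
  ultimately show ?thesis
    by (simp add: prob_compl max_tail_def Q_def)
qed

lemma prob_max_abs_eta_ge:
  assumes "1 \<le> n" "0 < t"
  shows "prob {\<omega>\<in>space M. t \<le> max_abs_eta n \<omega>} = 1 - (1 - 2 * Q t) ^ n"
proof -
  have "{\<omega>\<in>space M. max_abs_eta n \<omega> < t} = (\<Inter>i\<in>{1..n}. \<eta> i -` {-t<..<t} \<inter> space M)"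
    using assms by (auto simp: max_abs_eta_def abs_less_iff)
  then have "prob {\<omega>\<in>space M. max_abs_eta n \<omega> < t} = (1 - 2 * Q t) ^ n"
    using prob_INT_eta_vimage[of "{1..n}" "{-t<..<t}"] assms by (simp add: prob_abs_eta_less)
  moreover have "{\<omega>\<in>space M. t \<le> max_abs_eta n \<omega>} = space M - {\<omega>\<in>space M. max_abs_eta n \<omega> < t}"
    by auto
  ultimately show ?thesis
    by (simp add: prob_compl)
qed

lemma max_abs_eta_nonneg: "1 \<le> n \<Longrightarrow> 0 \<le> max_abs_eta n \<omega>"
  unfolding max_abs_eta_def by (rule order_trans[OF abs_ge_zero Max_ge[of _ "\<bar>\<eta> 1 \<omega>\<bar>"]]) auto

lemma expectation_max_eta:
  assumes "1 \<le> m"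
  shows "set_integrable lborel {0<..} (max_tail m)"
    and "set_integrable lborel {..<0} (\<lambda>t. \<Phi> t ^ m)"
    and "expectation (max_eta m) = (LINT t:{0<..}|lborel. max_tail m t) - (LINT t:{..<0}|lborel. \<Phi> t ^ m)"
proof -
  have "(\<lambda>t. prob {\<omega>\<in>space M. t \<le> max_eta m \<omega>}) = max_tail m"
    "(\<lambda>t. prob {\<omega>\<in>space M. max_eta m \<omega> \<le> t}) = (\<lambda>t. \<Phi> t ^ m)"
    using prob_max_eta_ge[OF assms] prob_max_eta_le[OF assms] by auto
  with expectation_eq_tail_integrals[OF integrable_max_eta[OF assms]]
  show "set_integrable lborel {0<..} (max_tail m)"
    "set_integrable lborel {..<0} (\<lambda>t. \<Phi> t ^ m)"
    "expectation (max_eta m) = (LINT t:{0<..}|lborel. max_tail m t) - (LINT t:{..<0}|lborel. \<Phi> t ^ m)"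
    by simp_all
qed

lemma expectation_max_abs_eta:
  assumes "1 \<le> n"
  shows "set_integrable lborel {0<..} (tail_gap n)"
    and "expectation (max_abs_eta n) = (LINT t:{0<..}|lborel. max_tail (2*n) t) + (LINT t:{0<..}|lborel. tail_gap n t)"
proof -
  note tails = expectation_eq_tail_integrals[OF integrable_max_abs_eta[OF assms]]
  have ge: "prob {\<omega>\<in>space M. t \<le> max_abs_eta n \<omega>} = max_tail (2*n) t + tail_gap n t" if "t \<in> {0<..}" for t
    using that assms by (simp add: prob_max_abs_eta_ge max_tail_def tail_gap_def)
  have le: "prob {\<omega>\<in>space M. max_abs_eta n \<omega> \<le> t} = 0" if "t \<in> {..<0}" for t
  proof -
    have "{\<omega>\<in>space M. max_abs_eta n \<omega> \<le> t} = {}"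
      using that max_abs_eta_nonneg[OF assms] by (auto simp: not_le intro: less_le_trans)
    then show ?thesis
      by (simp only: measure_empty)
  qed
  have sum: "set_integrable lborel {0<..} (\<lambda>t. max_tail (2*n) t + tail_gap n t)"
    using tails(1) by (subst (asm) set_integrable_cong[OF refl refl ge]) auto
  have "set_integrable lborel {0<..} (\<lambda>t. (max_tail (2*n) t + tail_gap n t) - max_tail (2*n) t)"
    using sum expectation_max_eta(1)[of "2*n"] assms by (intro set_integral_diff(1)) auto
  then show gap: "set_integrable lborel {0<..} (tail_gap n)"
    by simp
  have "(LINT t:{0<..}|lborel. prob {\<omega>\<in>space M. t \<le> max_abs_eta n \<omega>})
      = (LINT t:{0<..}|lborel. max_tail (2*n) t + tail_gap n t)"
    using ge by (intro set_lebesgue_integral_cong) auto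
  moreover have "(\<lambda>t. indicator {..<0} t * prob {\<omega>\<in>space M. max_abs_eta n \<omega> \<le> t}) = (\<lambda>_. 0)"
    using le by (auto split: split_indicator)
  ultimately have "expectation (max_abs_eta n) = (LINT t:{0<..}|lborel. max_tail (2*n) t + tail_gap n t)"
    using tails(3) by (simp add: set_lebesgue_integral_def)
  also have "\<dots> = (LINT t:{0<..}|lborel. max_tail (2*n) t) + (LINT t:{0<..}|lborel. tail_gap n t)"
    using expectation_max_eta(1)[of "2*n"] gap assms by (simp add: set_integral_add)
  finally show "expectation (max_abs_eta n)
      = (LINT t:{0<..}|lborel. max_tail (2*n) t) + (LINT t:{0<..}|lborel. tail_gap n t)" .
qed

lemma set_integrable_Phi_Iio: "set_integrable lborel {..<0} \<Phi>"
proof -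
  have "prob {\<omega>\<in>space M. \<eta> 1 \<omega> \<le> t} = \<Phi> t" for t
    using prob_eta_atMost[of 1 t] by (simp add: vimage_def Int_def conj_commute)
  then show ?thesis
    using expectation_eq_tail_integrals(2)[OF integrable_eta[of 1]] by simp
qed

lemma Phi_power_Iio_integral_bounds:
  assumes "1 \<le> n"
  shows "0 \<le> (LINT t:{..<0}|lborel. \<Phi> t ^ (2*n))"
    and "(LINT t:{..<0}|lborel. \<Phi> t ^ (2*n)) \<le> 2 * (LINT t:{..<0}|lborel. \<Phi> t) * (1/4) ^ n"
proof -
  have Phi: "0 \<le> \<Phi> t" "\<Phi> t \<le> 1/2" if "t < 0" for t
    using Phi_minus[of "- t"] Q_le_half[of "- t"] Q_nonneg[of "- t"] that by auto
  then show "0 \<le> (LINT t:{..<0}|lborel. \<Phi> t ^ (2*n))"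
    by (intro set_integral_nonneg) auto
  have "(LINT t:{..<0}|lborel. \<Phi> t ^ (2*n)) \<le> (LINT t:{..<0}|lborel. 2 * (1/4) ^ n * \<Phi> t)"
  proof (rule set_integral_mono)
    show "set_integrable lborel {..<0} (\<lambda>t. \<Phi> t ^ (2*n))"
      using expectation_max_eta(2)[of "2*n"] assms by simp
    show "set_integrable lborel {..<0} (\<lambda>t. 2 * (1/4) ^ n * \<Phi> t)"
      by (intro set_integrable_mult_right set_integrable_Phi_Iio)
    fix t :: real assume "t \<in> {..<0}"
    then have "\<Phi> t ^ (2*n - 1) \<le> (1/2) ^ (2*n - 1)"
      using Phi by (intro power_mono) auto
    also have "(1/2::real) ^ (2*n - 1) = 2 * (1/4) ^ n"
      using assms by (simp add: power_diff power_mult power2_eq_square)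
    finally have "\<Phi> t ^ (2*n - 1) * \<Phi> t \<le> 2 * (1/4) ^ n * \<Phi> t"
      using Phi \<open>t \<in> {..<0}\<close> by (intro mult_right_mono) auto
    moreover have "\<Phi> t ^ (2*n) = \<Phi> t ^ (2*n - 1) * \<Phi> t"
      using assms by (simp flip: power_Suc2)
    ultimately show "\<Phi> t ^ (2*n) \<le> 2 * (1/4) ^ n * \<Phi> t"
      by simp
  qed
  then show "(LINT t:{..<0}|lborel. \<Phi> t ^ (2*n)) \<le> 2 * (LINT t:{..<0}|lborel. \<Phi> t) * (1/4) ^ n"
    by (simp add: set_integral_mult_right mult_ac)
qed

lemma expectation_ratio_asymp:
  "((\<lambda>n. 8 * real n * ln n * (expectation (max_abs_eta n) / expectation (max_eta (2*n)) - 1)) \<longlongrightarrow> 1) sequentially"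
proof -
  define T where "T n = sqrt (2 * ln (real n))" for n :: nat
  define I where "I n = (LINT t:{0<..}|lborel. tail_gap n t)" for n
  define J where "J n = (LINT t:{0<..}|lborel. max_tail (2*n) t)" for n
  define N where "N n = (LINT t:{..<0}|lborel. \<Phi> t ^ (2*n))" for n
  define C where "C = 2 * (LINT t:{..<0}|lborel. \<Phi> t)"
  have I: "((\<lambda>n. 4 * real n * T n * I n) \<longlongrightarrow> 1) sequentially"
    unfolding T_def I_def by (intro tail_gap_integral_asymp expectation_max_abs_eta(1))
  have J: "((\<lambda>n. J n / T n) \<longlongrightarrow> 1) sequentially"
    unfolding T_def J_def by (intro max_tail_integral_asymp expectation_max_eta(1)) simp
  have N_bounds: "\<forall>\<^sub>F n in sequentially. 0 \<le> N n \<and> N n \<le> C * (1/4) ^ n"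
    using eventually_ge_at_top[of 1]
    by eventually_elim (use Phi_power_Iio_integral_bounds in \<open>simp add: N_def C_def\<close>)
  have N1: "((\<lambda>n. 4 * real n * T n * N n) \<longlongrightarrow> 0) sequentially"
    and N2: "((\<lambda>n. N n / T n) \<longlongrightarrow> 0) sequentially"
    unfolding T_def using N_bounds by (rule geometrically_bounded_negligible)+
  have num: "((\<lambda>n. 4 * real n * T n * I n + 4 * real n * T n * N n) \<longlongrightarrow> 1 + 0) sequentially"
    by (rule tendsto_add[OF I N1])
  have denom: "((\<lambda>n. J n / T n - N n / T n) \<longlongrightarrow> 1 - 0) sequentially"
    by (rule tendsto_diff[OF J N2])
  have lim: "((\<lambda>n. (4 * real n * T n * I n + 4 * real n * T n * N n) / (J n / T n - N n / T n))
      \<longlongrightarrow> (1 + 0) / (1 - 0)) sequentially"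
    using num denom by (rule tendsto_divide) simp
  have "\<forall>\<^sub>F n in sequentially. 1/2 < J n / T n - N n / T n"
    using denom by (rule order_tendstoD) simp
  then have "\<forall>\<^sub>F n in sequentially. (4 * real n * T n * I n + 4 * real n * T n * N n) / (J n / T n - N n / T n)
      = 8 * real n * ln n * (expectation (max_abs_eta n) / expectation (max_eta (2*n)) - 1)"
    using eventually_ge_at_top[of 2]
  proof eventually_elim
    case (elim n)
    then have "0 < T n" "J n - N n \<noteq> 0"
      by (auto simp: T_def field_simps)
    moreover have "8 * real n * ln n = 4 * real n * T n * T n"
      using elim by (simp add: T_def)
    moreover have "expectation (max_abs_eta n) = J n + I n" "expectation (max_eta (2*n)) = J n - N n"
      using elim expectation_max_abs_eta(2)[of n] expectation_max_eta(3)[of "2*n"] by (simp_all add: I_def J_def N_def)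
    ultimately show ?case
      by (simp only:) (simp add: field_simps)
  qed
  with lim show ?thesis
    by (simp add: tendsto_cong)
qed

end

theorem theorem2p3:
  fixes M :: "'a measure" and \<eta> :: "nat \<Rightarrow> 'a \<Rightarrow> real"
  assumes "prob_space M"
    and "prob_space.indep_vars M (\<lambda>_. borel) \<eta> {1..}"
    and "\<And>i. i \<ge> 1 \<Longrightarrow> distributed M lborel (\<eta> i) std_normal_density"
  shows "((\<lambda>n::nat.
            8 * real n * ln (real n) *
            (prob_space.expectation M (\<lambda>\<omega>. Max ((\<lambda>i. \<bar>\<eta> i \<omega>\<bar>) ` {1..n}))
             / prob_space.expectation M (\<lambda>\<omega>. Max ((\<lambda>i. \<eta> i \<omega>) ` {1..2*n})) - 1))
         \<longlongrightarrow> 1) sequentially"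
proof -
  interpret iid_std_normal M \<eta>
    by (intro iid_std_normal.intro iid_std_normal_axioms.intro assms)
  show ?thesis
    using expectation_ratio_asymp by (simp add: max_abs_eta_def[abs_def] max_eta_def[abs_def])
qed

end
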